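(* Let $K,L\subseteq\Sigma^*$ be regular languages with $\kappa(K)=m\ge 2$ and $\kappa(L)=n\ge 2$. If $K$ and $L$ are both prefix-closed, or both factor-closed, or both subword-closed, then: - $\kappa(K\cap L)\le mn-(m+n-2)$; - $\kappa(K\cup L)\le mn$ and $\kappa(K\oplus L)\le mn$; - $\kappa(K\setminus L)\le mn-(n-1)$. If $K$ and $L$ are both suffix-closed, then $\kappa(K\circ L)\le mn$ for each of $\circ\in\{\cup,\cap,\setminus,\oplus\}$. All these bounds are tight: for every $m,n\ge 2$, every alphabet with $|\Sigma|\ge 4$, each of these classes and each listed operation, there exist languages in that class over $\Sigma$ with $\kappa(K)=m$, $\kappa(L)=n$ that attain the stated bound.
   Context: $\Sigma$ is a finite non-empty alphabet. For $L\subseteq\Sigma^*$ and $w\in\Sigma^*$, $L_w=\{x\mid wx\in L\}$, and $\kappa(L)$ is the number of distinct quotients $L_w$ (the state complexity of $L$). $K\oplus L$ is symmetric difference. A language $L$ is prefix-closed (suffix-, factor-, subword-closed) if whenever $w\in L$, every prefix (suffix, factor, subword) of $w$ is in $L$. Here $x$ is a factor of $w$ if $w=uxv$, and $a_1\cdots a_n$ is a subword of $w$ if $w=w_0a_1w_1\cdots a_nw_n$ for some words $w_i$, i.e. a scattered subsequence. *)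

theory Defs
  imports Main "HOL-Library.Sublist"
begin

text \<open>Words over an alphabet Sigma are lists; languages are sets of lists contained in lists Sigma.\<close>

definition quotient_lang :: "'a list set \<Rightarrow> 'a list \<Rightarrow> 'a list set" where
  "quotient_lang L w = {x. w @ x \<in> L}"

definition kappa :: "'a set \<Rightarrow> 'a list set \<Rightarrow> nat" where
  "kappa \<Sigma> L = card {quotient_lang L w | w. w \<in> lists \<Sigma>}"

definition regular :: "'a set \<Rightarrow> 'a list set \<Rightarrow> bool" where
  "regular \<Sigma> L \<longleftrightarrow> L \<subseteq> lists \<Sigma> \<and>
     (\<exists>(Q :: nat set) (\<delta> :: nat \<Rightarrow> 'a \<Rightarrow> nat) q0 F.
        finite Q \<and> q0 \<in> Q \<and> F \<subseteq> Q \<and> (\<forall>q\<in>Q. \<forall>a\<in>\<Sigma>. \<delta> q a \<in> Q) \<and>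
        L = {w \<in> lists \<Sigma>. foldl \<delta> q0 w \<in> F})"

definition symdiff :: "'a set \<Rightarrow> 'a set \<Rightarrow> 'a set" where
  "symdiff K L = (K - L) \<union> (L - K)"

definition prefix_closed :: "'a list set \<Rightarrow> bool" where
  "prefix_closed L \<longleftrightarrow> (\<forall>w\<in>L. \<forall>u. prefix u w \<longrightarrow> u \<in> L)"

definition suffix_closed :: "'a list set \<Rightarrow> bool" where
  "suffix_closed L \<longleftrightarrow> (\<forall>w\<in>L. \<forall>u. suffix u w \<longrightarrow> u \<in> L)"

text \<open>Factor = contiguous sublist (library notion sublist).\<close>
definition factor_closed :: "'a list set \<Rightarrow> bool" where
  "factor_closed L \<longleftrightarrow> (\<forall>w\<in>L. \<forall>u. sublist u w \<longrightarrow> u \<in> L)"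

text \<open>Subword = scattered subsequence (library notion subseq).\<close>
definition subword_closed :: "'a list set \<Rightarrow> bool" where
  "subword_closed L \<longleftrightarrow> (\<forall>w\<in>L. \<forall>u. subseq u w \<longrightarrow> u \<in> L)"

end

theory Submission
  imports Defs
begin

(* The quotient of K \<circ> L by w is K_w \<circ> L_w, so kappa (K \<circ> L) is at most the
   number of pairs of quotients, kappa K * kappa L; with no closure hypothesis this is already the
   bound for suffix-closed languages.  A prefix-closed language other than \<Sigma>* has the empty
   quotient, which absorbs intersection on both sides and difference on the left; discounting
   the absorbed pairs gives (m-1)(n-1)+1 and (m-1)n+1.  Factor- and subword-closed languages are
   prefix-closed, so the same bounds apply to them.

   The witnesses are counter languages: at most m - 2 occurrences of a letter a after
   the last "reset" letter.  Without resets they are subword-closed (hence factor- and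
   prefix-closed); with resets they are suffix-closed.  Their quotients are indexed by the counter
   value, and for two counters on distinct letters all pairs of values are reached; short test
   words a^p b^q (and, with resets, a^p d and c b^q) separate every pair that is not forced to be
   absorbed. *)

abbreviation quotients :: "'a set \<Rightarrow> 'a list set \<Rightarrow> 'a list set set" where
  "quotients \<Sigma> L \<equiv> {quotient_lang L w | w. w \<in> lists \<Sigma>}"

lemma quotient_lang_append: "quotient_lang (quotient_lang L w) v = quotient_lang L (w @ v)"
  by (auto simp: quotient_lang_def)

lemma quotient_lang_Nil: "quotient_lang L [] = L"
  by (auto simp: quotient_lang_def)

(* A positive kappa means finitely many quotients (card of an infinite set is 0). *)
lemma finite_quotients_if_kappa_pos: "1 \<le> kappa \<Sigma> L \<Longrightarrow> finite (quotients \<Sigma> L)"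
  unfolding kappa_def by (rule card_ge_0_finite) simp

lemma kappa_eq_card_image:
  assumes quot: "\<And>w. w \<in> lists \<Sigma> \<Longrightarrow> st w \<in> I \<and> quotient_lang M w = G (st w)"
    and reach: "I \<subseteq> st ` lists \<Sigma>"
  shows "kappa \<Sigma> M = card (G ` I)"
proof -
  have "quotients \<Sigma> M = G ` I"
    using quot reach by fastforce
  then show ?thesis by (simp add: kappa_def)
qed

(* Myhill-Nerode, easy direction: finitely many quotients yield a DFA whose states are
   indices of quotients.  Used to show that the witness languages are regular. *)
lemma regular_if_finite_quotients:
  assumes sub: "L \<subseteq> lists \<Sigma>" and fin: "finite (quotients \<Sigma> L)"
  shows "regular \<Sigma> L"
proof -
  let ?N = "card (quotients \<Sigma> L)"
  obtain g where g: "bij_betw g {0..<?N} (quotients \<Sigma> L)"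
    using ex_bij_betw_nat_finite[OF fin] by blast
  define idx where "idx = inv_into {0..<?N} g"
  have idx_in: "X \<in> quotients \<Sigma> L \<Longrightarrow> idx X \<in> {0..<?N}" for X
    unfolding idx_def using bij_betw_apply[OF bij_betw_inv_into[OF g]] .
  have g_idx: "X \<in> quotients \<Sigma> L \<Longrightarrow> g (idx X) = X" for X
    unfolding idx_def using bij_betw_inv_into_right[OF g] .
  have quot_in: "w \<in> lists \<Sigma> \<Longrightarrow> quotient_lang L w \<in> quotients \<Sigma> L" for w
    by blast
  define \<delta> where "\<delta> q a = idx (quotient_lang (g q) [a])" for q a
  define F where "F = {q \<in> {0..<?N}. [] \<in> g q}"
  have run: "foldl \<delta> (idx L) w = idx (quotient_lang L w)" if "w \<in> lists \<Sigma>" for w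
    using that
  proof (induction w rule: rev_induct)
    case Nil show ?case by (simp add: quotient_lang_Nil)
  next
    case (snoc a w)
    then have "w \<in> lists \<Sigma>" by simp
    then show ?case
      using snoc.IH g_idx[OF quot_in] by (simp add: \<delta>_def quotient_lang_append)
  qed
  have L_in: "L \<in> quotients \<Sigma> L"
    using quot_in[of "[]"] by (simp add: quotient_lang_Nil)
  have closed: "\<delta> q a \<in> {0..<?N}" if q: "q \<in> {0..<?N}" and a: "a \<in> \<Sigma>" for q a
  proof -
    obtain w where "w \<in> lists \<Sigma>" "g q = quotient_lang L w"
      using bij_betw_apply[OF g q] by blast
    then show ?thesis
      using a idx_in[OF quot_in[of "w @ [a]"]] by (simp add: \<delta>_def quotient_lang_append)
  qed
  have accept: "L = {w \<in> lists \<Sigma>. foldl \<delta> (idx L) w \<in> F}"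
  proof -
    have "w \<in> L \<longleftrightarrow> foldl \<delta> (idx L) w \<in> F" if "w \<in> lists \<Sigma>" for w
      using that run[OF that] idx_in[OF quot_in] g_idx[OF quot_in]
      by (simp add: F_def quotient_lang_def)
    then show ?thesis using sub by auto
  qed
  show ?thesis
    unfolding regular_def
    using sub idx_in[OF L_in] closed accept
    by (intro conjI exI[of _ "{0..<?N}"] exI[of _ \<delta>] exI[of _ "idx L"] exI[of _ F]) (auto simp: F_def)
qed

lemma quotient_lang_Un: "quotient_lang (K \<union> L) w = quotient_lang K w \<union> quotient_lang L w"
  and quotient_lang_Int: "quotient_lang (K \<inter> L) w = quotient_lang K w \<inter> quotient_lang L w"
  and quotient_lang_Diff: "quotient_lang (K - L) w = quotient_lang K w - quotient_lang L w"
  and quotient_lang_symdiff: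
    "quotient_lang (symdiff K L) w = symdiff (quotient_lang K w) (quotient_lang L w)"
  by (auto simp: quotient_lang_def symdiff_def)

lemma kappa_le_card:
  assumes "\<And>w. w \<in> lists \<Sigma> \<Longrightarrow> quotient_lang M w \<in> S" and "finite S"
  shows "kappa \<Sigma> M \<le> card S"
  unfolding kappa_def using assms by (intro card_mono) auto

lemma kappa_op_le:
  assumes quot: "\<And>w. quotient_lang M w = f (quotient_lang K w) (quotient_lang L w)"
    and K: "1 \<le> kappa \<Sigma> K" and L: "1 \<le> kappa \<Sigma> L"
  shows "kappa \<Sigma> M \<le> kappa \<Sigma> K * kappa \<Sigma> L"
proof -
  let ?P = "quotients \<Sigma> K \<times> quotients \<Sigma> L"
  have fin: "finite ?P"
    using finite_quotients_if_kappa_pos[OF K] finite_quotients_if_kappa_pos[OF L] by simp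
  have "kappa \<Sigma> M \<le> card (case_prod f ` ?P)"
    using fin by (intro kappa_le_card) (auto simp: quot)
  also have "\<dots> \<le> card ?P"
    using fin by (rule card_image_le)
  finally show ?thesis
    by (simp add: kappa_def card_cartesian_product)
qed

lemma kappa_op_le_absorbing:
  assumes quot: "\<And>w. quotient_lang M w = f (quotient_lang K w) (quotient_lang L w)"
    and fin: "finite A" "finite B"
    and absorb: "\<And>w. w \<in> lists \<Sigma> \<Longrightarrow>
      (quotient_lang K w \<in> A \<and> quotient_lang L w \<in> B) \<or> quotient_lang M w = {}"
  shows "kappa \<Sigma> M \<le> card A * card B + 1"
proof -
  have "kappa \<Sigma> M \<le> card (insert {} (case_prod f ` (A \<times> B)))"
    using fin absorb by (intro kappa_le_card) (auto simp: quot)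
  also have "\<dots> \<le> card (case_prod f ` (A \<times> B)) + 1"
    using fin by (simp add: card_insert_if)
  also have "card (case_prod f ` (A \<times> B)) \<le> card (A \<times> B)"
    using fin by (intro card_image_le) simp
  finally show ?thesis
    by (simp add: card_cartesian_product)
qed

(* The product bound for the four Boolean operations.  With no closure hypothesis at all it is
   already the bound claimed for suffix-closed languages. *)
lemma kappa_boolean_ops_le:
  assumes "1 \<le> kappa \<Sigma> K" "1 \<le> kappa \<Sigma> L"
  shows "kappa \<Sigma> (K \<union> L) \<le> kappa \<Sigma> K * kappa \<Sigma> L"
    and "kappa \<Sigma> (K \<inter> L) \<le> kappa \<Sigma> K * kappa \<Sigma> L"
    and "kappa \<Sigma> (K - L) \<le> kappa \<Sigma> K * kappa \<Sigma> L"
    and "kappa \<Sigma> (symdiff K L) \<le> kappa \<Sigma> K * kappa \<Sigma> L"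
  by (rule kappa_op_le[where f="(\<union>)", OF quotient_lang_Un assms],
      rule kappa_op_le[where f="(\<inter>)", OF quotient_lang_Int assms],
      rule kappa_op_le[where f="(-)", OF quotient_lang_Diff assms],
      rule kappa_op_le[where f=symdiff, OF quotient_lang_symdiff assms])

lemma empty_quotient_if_prefix_closed:
  assumes "prefix_closed K" "K \<subseteq> lists \<Sigma>" "2 \<le> kappa \<Sigma> K"
  shows "{} \<in> quotients \<Sigma> K"
proof (cases "K = lists \<Sigma>")
  case True
  then have "quotients \<Sigma> K = {lists \<Sigma>}"
    by (auto simp: quotient_lang_def)
  then show ?thesis
    using assms(3) by (simp add: kappa_def)
next
  case False
  then obtain w where w: "w \<in> lists \<Sigma>" "w \<notin> K"
    using assms(2) by blast
  then have "quotient_lang K w = {}"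
    using assms(1) by (auto simp: quotient_lang_def prefix_closed_def)
  then show ?thesis
    using w by blast
qed

(* For prefix-closed K, L the empty quotient absorbs intersection on both sides. *)
lemma kappa_prefix_closed_Int_le:
  assumes "prefix_closed K" "prefix_closed L" "K \<subseteq> lists \<Sigma>" "L \<subseteq> lists \<Sigma>"
    and "2 \<le> kappa \<Sigma> K" "2 \<le> kappa \<Sigma> L"
  shows "kappa \<Sigma> (K \<inter> L) \<le> (kappa \<Sigma> K - 1) * (kappa \<Sigma> L - 1) + 1"
proof -
  let ?A = "quotients \<Sigma> K - {{}}" and ?B = "quotients \<Sigma> L - {{}}"
  have "kappa \<Sigma> (K \<inter> L) \<le> card ?A * card ?B + 1"
    using assms(5,6) finite_quotients_if_kappa_pos[of \<Sigma> K] finite_quotients_if_kappa_pos[of \<Sigma> L]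
    by (intro kappa_op_le_absorbing[where f="(\<inter>)", OF quotient_lang_Int]) (auto simp: quotient_lang_Int)
  moreover have "card ?A = kappa \<Sigma> K - 1" "card ?B = kappa \<Sigma> L - 1"
    using empty_quotient_if_prefix_closed[OF assms(1,3,5)]
      empty_quotient_if_prefix_closed[OF assms(2,4,6)] assms(5,6)
      finite_quotients_if_kappa_pos[of \<Sigma> K] finite_quotients_if_kappa_pos[of \<Sigma> L]
    by (simp_all add: kappa_def)
  ultimately show ?thesis by simp
qed

(* For prefix-closed K the empty quotient absorbs difference on the left. *)
lemma kappa_prefix_closed_Diff_le:
  assumes "prefix_closed K" "K \<subseteq> lists \<Sigma>" "2 \<le> kappa \<Sigma> K" "1 \<le> kappa \<Sigma> L"
  shows "kappa \<Sigma> (K - L) \<le> (kappa \<Sigma> K - 1) * kappa \<Sigma> L + 1"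
proof -
  let ?A = "quotients \<Sigma> K - {{}}"
  have "kappa \<Sigma> (K - L) \<le> card ?A * card (quotients \<Sigma> L) + 1"
    using assms(3,4) finite_quotients_if_kappa_pos[of \<Sigma> K] finite_quotients_if_kappa_pos[of \<Sigma> L]
    by (intro kappa_op_le_absorbing[where f="(-)", OF quotient_lang_Diff]) (auto simp: quotient_lang_Diff)
  moreover have "card ?A = kappa \<Sigma> K - 1"
    using empty_quotient_if_prefix_closed[OF assms(1-3)] assms(3)
      finite_quotients_if_kappa_pos[of \<Sigma> K]
    by (simp add: kappa_def)
  ultimately show ?thesis by (simp add: kappa_def)
qed

(* The bounds (m-1)(n-1)+1 and (m-1)n+1 in the form stated in the theorem. *)
lemma bound_identities:
  fixes m n :: nat assumes "2 \<le> m" "2 \<le> n"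
  shows "(m - 1) * (n - 1) + 1 = m * n - (m + n - 2)" and "(m - 1) * n + 1 = m * n - (n - 1)"
proof -
  obtain k l where "m = k + 2" "n = l + 2"
    using assms by (metis le_add_diff_inverse2)
  then show "(m - 1) * (n - 1) + 1 = m * n - (m + n - 2)" "(m - 1) * n + 1 = m * n - (n - 1)"
    by (simp_all add: algebra_simps)
qed

lemma subword_closed_imp_factor_closed: "subword_closed K \<Longrightarrow> factor_closed K"
  unfolding subword_closed_def factor_closed_def by blast

lemma factor_closed_imp_prefix_closed: "factor_closed K \<Longrightarrow> prefix_closed K"
  unfolding prefix_closed_def factor_closed_def by blast

lemma upper_bounds_prefix_closed:
  assumes "prefix_closed K" "prefix_closed L" "K \<subseteq> lists \<Sigma>" "L \<subseteq> lists \<Sigma>"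
    and m: "kappa \<Sigma> K = m" "2 \<le> m" and n: "kappa \<Sigma> L = n" "2 \<le> n"
  shows "kappa \<Sigma> (K \<inter> L) \<le> m * n - (m + n - 2) \<and> kappa \<Sigma> (K \<union> L) \<le> m * n \<and>
    kappa \<Sigma> (symdiff K L) \<le> m * n \<and> kappa \<Sigma> (K - L) \<le> m * n - (n - 1)"
proof -
  have "kappa \<Sigma> (K \<inter> L) \<le> (m - 1) * (n - 1) + 1"
    using kappa_prefix_closed_Int_le[OF assms(1-4)] m n by simp
  moreover have "kappa \<Sigma> (K - L) \<le> (m - 1) * n + 1"
    using kappa_prefix_closed_Diff_le[of K \<Sigma> L] assms m n by simp
  moreover have "kappa \<Sigma> (K \<union> L) \<le> m * n" "kappa \<Sigma> (symdiff K L) \<le> m * n"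
    using kappa_boolean_ops_le[of \<Sigma> K L] m n by simp_all
  ultimately show ?thesis
    using bound_identities[OF m(2) n(2)] by simp
qed

(* Two states of a counter saturating at m are equal as soon as they accept the same numbers
   of further letters: the tests i + p + 2 \<le> m distinguish all i < m. *)
lemma threshold_inj:
  fixes i i' m :: nat
  assumes "i < m" "i' < m" and same: "\<And>p. i + p + 2 \<le> m \<longleftrightarrow> i' + p + 2 \<le> m"
  shows "i = i'"
proof (rule ccontr)
  assume "i \<noteq> i'"
  then show False
    using same[of "m - 2 - min i i'"] assms(1,2) by (cases "i < i'") auto
qed

lemma inj_on_pairs_by_thresholds:
  fixes G :: "nat \<times> nat \<Rightarrow> 'b"
  assumes "I \<subseteq> {..<m} \<times> {..<n}"
    and sep: "\<And>i j i' j'. (i, j) \<in> I \<Longrightarrow> (i', j') \<in> I \<Longrightarrow> G (i, j) = G (i', j') \<Longrightarrow>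
       (\<forall>p. i + p + 2 \<le> m \<longleftrightarrow> i' + p + 2 \<le> m) \<and> (\<forall>q. j + q + 2 \<le> n \<longleftrightarrow> j' + q + 2 \<le> n)"
  shows "inj_on G I"
proof (rule inj_onI)
  fix x y assume "x \<in> I" "y \<in> I" "G x = G y"
  moreover obtain i j i' j' where "x = (i, j)" "y = (i', j')" by fastforce
  ultimately show "x = y"
    using assms(1) sep[of i j i' j'] threshold_inj[of i m i'] threshold_inj[of j n j'] by auto
qed

lemma card_image_collapse:
  assumes "J \<subseteq> I" "z \<in> I - J" "\<And>x. x \<in> I - J \<Longrightarrow> G x = G z" "G z \<notin> G ` J"
    and "inj_on G J" "finite J"
  shows "card (G ` I) = card J + 1"
proof -
  have "G ` I = insert (G z) (G ` J)"
    using assms(1-3) by blast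
  then show ?thesis
    using assms(4-6) by (simp add: card_image)
qed

(* The part of w after the last occurrence of a letter from C (all of w if there is none). *)
definition tail_after :: "'a set \<Rightarrow> 'a list \<Rightarrow> 'a list" where
  "tail_after C w = rev (takeWhile (\<lambda>x. x \<notin> C) (rev w))"

lemma tail_after_append:
  "tail_after C (xs @ ys) = (if set ys \<inter> C = {} then tail_after C xs @ ys else tail_after C ys)"
  unfolding tail_after_def by (auto simp: takeWhile_append)

lemma tail_after_id: "set w \<inter> C = {} \<Longrightarrow> tail_after C w = w"
  unfolding tail_after_def by (subst takeWhile_eq_all_conv[THEN iffD2]) auto

lemma tail_after_reset: "c \<in> C \<Longrightarrow> set v \<inter> C = {} \<Longrightarrow> tail_after C (u @ c # v) = v"
  using tail_after_append[of C u "c # v"] tail_after_id[of "c # v" C] unfolding tail_after_def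
  by (auto simp: takeWhile_append)

lemma count_list_replicate: "count_list (replicate p x) y = (if x = y then p else 0)"
  by (induction p) auto

(* Witness languages: the words over \<Sigma> with at most m - 2 occurrences of a after the last
   letter of C.  The letters of C reset the counter; for C = {} there are no resets. *)
definition counter_lang :: "'a set \<Rightarrow> 'a \<Rightarrow> 'a set \<Rightarrow> nat \<Rightarrow> 'a list set" where
  "counter_lang \<Sigma> a C m = {w \<in> lists \<Sigma>. count_list (tail_after C w) a + 2 \<le> m}"

(* The quotient of counter_lang after a word that has left the counter at value i. *)
definition counter_res :: "'a set \<Rightarrow> 'a \<Rightarrow> 'a set \<Rightarrow> nat \<Rightarrow> nat \<Rightarrow> 'a list set" where
  "counter_res \<Sigma> a C m i = {x \<in> lists \<Sigma>.
     (if set x \<inter> C = {} then i + count_list x a else count_list (tail_after C x) a) + 2 \<le> m}"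

definition counter_state :: "'a \<Rightarrow> 'a set \<Rightarrow> nat \<Rightarrow> 'a list \<Rightarrow> nat" where
  "counter_state a C m w = min (count_list (tail_after C w) a) (m - 1)"

lemma counter_state_less: "1 \<le> m \<Longrightarrow> counter_state a C m w < m"
  by (simp add: counter_state_def)

lemma quotient_counter_lang:
  assumes "w \<in> lists \<Sigma>"
  shows "quotient_lang (counter_lang \<Sigma> a C m) w = counter_res \<Sigma> a C m (counter_state a C m w)"
proof -
  have "count_list (tail_after C w) a + k + 2 \<le> m \<longleftrightarrow> counter_state a C m w + k + 2 \<le> m" for k
    by (auto simp: counter_state_def)
  then show ?thesis
    using assms by (auto simp: quotient_lang_def counter_lang_def counter_res_def
        tail_after_append add.assoc)
qed

lemma counter_res_free:
  assumes "x \<in> lists (\<Sigma> - C)"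
  shows "x \<in> counter_res \<Sigma> a C m i \<longleftrightarrow> i + count_list x a + 2 \<le> m"
proof -
  have "set x \<inter> C = {}" using assms by auto
  then show ?thesis using assms by (auto simp: counter_res_def)
qed

lemma counter_res_reset:
  assumes "u @ c # v \<in> lists \<Sigma>" "c \<in> C" "v \<in> lists (\<Sigma> - C - {a})" "2 \<le> m"
  shows "u @ c # v \<in> counter_res \<Sigma> a C m i"
proof -
  have "set v \<inter> C = {}" using assms(3) by auto
  then have "tail_after C (u @ c # v) = v"
    using assms(2) by (rule tail_after_reset[rotated])
  moreover have "a \<notin> set v" using assms(3) by auto
  ultimately show ?thesis
    using assms by (auto simp: counter_res_def)
qed

lemma counter_res_saturated: "1 \<le> m \<Longrightarrow> counter_res \<Sigma> a {} m (m - 1) = {}"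
  by (auto simp: counter_res_def)

(* Dropping a prefix never increases the count after the last reset. *)
lemma counter_lang_suffix_closed: "suffix_closed (counter_lang \<Sigma> a C m)"
  unfolding suffix_closed_def
proof (intro ballI allI impI)
  fix w u assume w: "w \<in> counter_lang \<Sigma> a C m" and "suffix u w"
  then obtain v where v: "w = v @ u" by (auto simp: suffix_def)
  have "count_list (tail_after C u) a \<le> count_list (tail_after C w) a"
    using v by (simp add: tail_after_append tail_after_id)
  then show "u \<in> counter_lang \<Sigma> a C m"
    using w v by (auto simp: counter_lang_def)
qed

(* Without resets the language only bounds the number of letters a, so it is subword-closed. *)
lemma counter_lang_subword_closed: "subword_closed (counter_lang \<Sigma> a {} m)"
  unfolding subword_closed_def
proof (intro ballI allI impI)
  fix w u assume w: "w \<in> counter_lang \<Sigma> a {} m" and u: "subseq u w"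
  have "set u \<subseteq> set w"
    using u by (auto elim: list_emb_set)
  have "count_list u a \<le> count_list w a"
    using list_emb_length[OF subseq_filter[OF u, of "(=) a"]] by (simp add: count_list_eq_length_filter)
  then show "u \<in> counter_lang \<Sigma> a {} m"
    using w \<open>set u \<subseteq> set w\<close> by (auto simp: counter_lang_def tail_after_id)
qed

lemma
  assumes a: "a \<in> \<Sigma>" "a \<notin> C" and m: "2 \<le> m"
  shows kappa_counter_lang: "kappa \<Sigma> (counter_lang \<Sigma> a C m) = m"
    and regular_counter_lang: "regular \<Sigma> (counter_lang \<Sigma> a C m)"
proof -
  have reach: "counter_state a C m (replicate i a) = i" if "i < m" for i
  proof -
    have "set (replicate i a) \<inter> C = {}" using a by auto
    then show ?thesis
      using that by (simp add: counter_state_def tail_after_id count_list_replicate)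
  qed
  have test: "replicate p a \<in> counter_res \<Sigma> a C m i \<longleftrightarrow> i + p + 2 \<le> m" for p i
    using a by (simp add: counter_res_free count_list_replicate replicate_in_lists)
  have "kappa \<Sigma> (counter_lang \<Sigma> a C m) = card (counter_res \<Sigma> a C m ` {..<m})"
  proof (rule kappa_eq_card_image)
    show "{..<m} \<subseteq> counter_state a C m ` lists \<Sigma>"
    proof
      fix i assume "i \<in> {..<m}"
      then have "i = counter_state a C m (replicate i a)" using reach by simp
      then show "i \<in> counter_state a C m ` lists \<Sigma>"
        by (rule image_eqI) (simp add: a replicate_in_lists)
    qed
  next
    fix w assume "w \<in> lists \<Sigma>"
    then show "counter_state a C m w \<in> {..<m} \<and>
        quotient_lang (counter_lang \<Sigma> a C m) w = counter_res \<Sigma> a C m (counter_state a C m w)"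
      using m by (simp add: counter_state_less quotient_counter_lang)
  qed
  also have "\<dots> = m"
  proof -
    have "inj_on (counter_res \<Sigma> a C m) {..<m}"
    proof (rule inj_onI)
      fix i i' assume "i \<in> {..<m}" "i' \<in> {..<m}" "counter_res \<Sigma> a C m i = counter_res \<Sigma> a C m i'"
      then show "i = i'"
        using test by (intro threshold_inj[of i m i']) auto
    qed
    then show ?thesis by (simp add: card_image)
  qed
  finally show "kappa \<Sigma> (counter_lang \<Sigma> a C m) = m" .
  then show "regular \<Sigma> (counter_lang \<Sigma> a C m)"
    using m by (intro regular_if_finite_quotients finite_quotients_if_kappa_pos)
      (auto simp: counter_lang_def)
qed

context
  fixes \<Sigma> :: "'a set" and a b :: 'a and C D :: "'a set" and m n :: nat
  assumes a: "a \<in> \<Sigma>" "a \<notin> C" "a \<notin> D" and b: "b \<in> \<Sigma>" "b \<notin> C" "b \<notin> D"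
    and ab: "a \<noteq> b" and m: "2 \<le> m" and n: "2 \<le> n"
begin

(* With two counters on distinct letters a, b (which are not resets), every pair of
   states (i, j) with i < m, j < n is reached by a^i b^j. *)
lemma kappa_two_counters:
  assumes quot: "\<And>w. quotient_lang M w =
    f (quotient_lang (counter_lang \<Sigma> a C m) w) (quotient_lang (counter_lang \<Sigma> b D n) w)"
  shows "kappa \<Sigma> M =
    card ((\<lambda>(i, j). f (counter_res \<Sigma> a C m i) (counter_res \<Sigma> b D n j)) ` ({..<m} \<times> {..<n}))"
proof (rule kappa_eq_card_image[where st="\<lambda>w. (counter_state a C m w, counter_state b D n w)"])
  fix w assume "w \<in> lists \<Sigma>"
  then show "(counter_state a C m w, counter_state b D n w) \<in> {..<m} \<times> {..<n} \<and>
      quotient_lang M w = (\<lambda>(i, j). f (counter_res \<Sigma> a C m i) (counter_res \<Sigma> b D n j))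
        (counter_state a C m w, counter_state b D n w)"
    using m n by (simp add: quot counter_state_less quotient_counter_lang)
next
  show "{..<m} \<times> {..<n} \<subseteq> (\<lambda>w. (counter_state a C m w, counter_state b D n w)) ` lists \<Sigma>"
  proof
    fix x assume "x \<in> {..<m} \<times> {..<n}"
    then obtain i j where x: "x = (i, j)" "i < m" "j < n" by blast
    let ?w = "replicate i a @ replicate j b"
    have "set ?w \<inter> C = {}" "set ?w \<inter> D = {}" using a b by auto
    then have "x = (counter_state a C m ?w, counter_state b D n ?w)"
      using x ab by (simp add: counter_state_def tail_after_id count_list_replicate)
    then show "x \<in> (\<lambda>w. (counter_state a C m w, counter_state b D n w)) ` lists \<Sigma>"
      by (rule image_eqI) (simp add: a b replicate_in_lists)
  qed
qed

(* Simplification rules deciding membership of reset-free test words such as a^p b^q. *)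
lemmas counter_tests = counter_res_free replicate_in_lists count_list_replicate a b ab ab[symmetric]

(* Any operation that restricts to X on words outside Y and to Y on words outside X keeps
   all m * n pairs apart, witnessed by the words a^p b^n and a^m b^q. *)
lemma kappa_counters_faithful:
  assumes quot: "\<And>w. quotient_lang M w =
      f (quotient_lang (counter_lang \<Sigma> a C m) w) (quotient_lang (counter_lang \<Sigma> b D n) w)"
    and left: "\<And>x X Y. x \<notin> Y \<Longrightarrow> x \<in> f X Y \<longleftrightarrow> x \<in> X"
    and right: "\<And>x X Y. x \<notin> X \<Longrightarrow> x \<in> f X Y \<longleftrightarrow> x \<in> Y"
  shows "kappa \<Sigma> M = m * n"
proof -
  let ?G = "\<lambda>(i, j). f (counter_res \<Sigma> a C m i) (counter_res \<Sigma> b D n j)"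
  have "inj_on ?G ({..<m} \<times> {..<n})"
  proof (rule inj_on_pairs_by_thresholds)
    fix i j i' j' assume "?G (i, j) = ?G (i', j')"
    then have same: "replicate p a @ replicate q b \<in> ?G (i, j) \<longleftrightarrow>
        replicate p a @ replicate q b \<in> ?G (i', j')" for p q
      by simp
    have "\<forall>p. i + p + 2 \<le> m \<longleftrightarrow> i' + p + 2 \<le> m"
      using same[of _ n] by (simp add: left counter_tests)
    moreover have "\<forall>q. j + q + 2 \<le> n \<longleftrightarrow> j' + q + 2 \<le> n"
      using same[of m] by (simp add: right counter_tests)
    ultimately show "(\<forall>p. i + p + 2 \<le> m \<longleftrightarrow> i' + p + 2 \<le> m) \<and>
        (\<forall>q. j + q + 2 \<le> n \<longleftrightarrow> j' + q + 2 \<le> n)" ..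
  qed simp
  then show ?thesis
    using kappa_two_counters[OF quot] by (simp add: card_image card_cartesian_product)
qed

corollary kappa_counters_Un: "kappa \<Sigma> (counter_lang \<Sigma> a C m \<union> counter_lang \<Sigma> b D n) = m * n"
  by (rule kappa_counters_faithful[where f="(\<union>)", OF quotient_lang_Un]) auto

corollary kappa_counters_symdiff:
  "kappa \<Sigma> (symdiff (counter_lang \<Sigma> a C m) (counter_lang \<Sigma> b D n)) = m * n"
  by (rule kappa_counters_faithful[where f=symdiff, OF quotient_lang_symdiff]) (auto simp: symdiff_def)

(* Without resets, intersection merges all pairs with a saturated coordinate into the empty
   quotient, and keeps the remaining (m-1)(n-1) pairs apart. *)
lemma kappa_counters_Int_collapsing:
  assumes "C = {}" "D = {}"
  shows "kappa \<Sigma> (counter_lang \<Sigma> a C m \<inter> counter_lang \<Sigma> b D n) = (m - 1) * (n - 1) + 1"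
proof -
  let ?G = "\<lambda>(i, j). counter_res \<Sigma> a C m i \<inter> counter_res \<Sigma> b D n j"
  let ?I = "{..<m} \<times> {..<n}" and ?J = "{..<m - 1} \<times> {..<n - 1}"
  have saturated: "?G x = {}" if "x \<in> ?I - ?J" for x
  proof -
    obtain i j where "x = (i, j)" "i = m - 1 \<or> j = n - 1"
      using \<open>x \<in> ?I - ?J\<close> by fastforce
    then show ?thesis
      using m n counter_res_saturated[of m \<Sigma> a] counter_res_saturated[of n \<Sigma> b] assms by auto
  qed
  have nonempty: "[] \<in> ?G x" if "x \<in> ?J" for x
    using that assms by (auto simp: counter_tests)
  have "inj_on ?G ?J"
  proof (rule inj_on_pairs_by_thresholds)
    fix i j i' j' assume "(i, j) \<in> ?J" "(i', j') \<in> ?J" and eq: "?G (i, j) = ?G (i', j')"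
    then have J: "i + 2 \<le> m" "i' + 2 \<le> m" "j + 2 \<le> n" "j' + 2 \<le> n"
      by auto
    have "replicate p a \<in> ?G (i, j) \<longleftrightarrow> replicate p a \<in> ?G (i', j')" for p
      using eq by simp
    then have "\<forall>p. i + p + 2 \<le> m \<longleftrightarrow> i' + p + 2 \<le> m"
      using J assms by (simp add: counter_tests)
    moreover have "replicate q b \<in> ?G (i, j) \<longleftrightarrow> replicate q b \<in> ?G (i', j')" for q
      using eq by simp
    then have "\<forall>q. j + q + 2 \<le> n \<longleftrightarrow> j' + q + 2 \<le> n"
      using J assms by (simp add: counter_tests)
    ultimately show "(\<forall>p. i + p + 2 \<le> m \<longleftrightarrow> i' + p + 2 \<le> m) \<and>
        (\<forall>q. j + q + 2 \<le> n \<longleftrightarrow> j' + q + 2 \<le> n)" ..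
  qed auto
  moreover have corner: "(m - 1, 0) \<in> ?I - ?J"
    using m n by auto
  moreover have "?G (m - 1, 0) \<notin> ?G ` ?J"
    using saturated[OF corner] nonempty by force
  ultimately have "card (?G ` ?I) = card ?J + 1"
  proof (intro card_image_collapse)
    show "?G x = ?G (m - 1, 0)" if "x \<in> ?I - ?J" for x
      using saturated[OF that] saturated[OF corner] by (simp only:)
  qed auto
  then show ?thesis
    using kappa_two_counters[where f="(\<inter>)", OF quotient_lang_Int] by (simp add: card_cartesian_product)
qed

(* Without resets, difference merges the pairs with saturated first coordinate into the empty
   quotient, and keeps the remaining (m-1)n pairs apart. *)
lemma kappa_counters_Diff_collapsing:
  assumes "C = {}" "D = {}"
  shows "kappa \<Sigma> (counter_lang \<Sigma> a C m - counter_lang \<Sigma> b D n) = (m - 1) * n + 1"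
proof -
  let ?G = "\<lambda>(i, j). counter_res \<Sigma> a C m i - counter_res \<Sigma> b D n j"
  let ?I = "{..<m} \<times> {..<n}" and ?J = "{..<m - 1} \<times> {..<n}"
  have saturated: "?G x = {}" if "x \<in> ?I - ?J" for x
  proof -
    obtain j where "x = (m - 1, j)"
      using \<open>x \<in> ?I - ?J\<close> by fastforce
    then show ?thesis
      using m counter_res_saturated[of m \<Sigma> a] assms by auto
  qed
  have nonempty: "replicate n b \<in> ?G x" if "x \<in> ?J" for x
    using that assms by (auto simp: counter_tests)
  have "inj_on ?G ?J"
  proof (rule inj_on_pairs_by_thresholds)
    fix i j i' j' assume "(i, j) \<in> ?J" "(i', j') \<in> ?J" and eq: "?G (i, j) = ?G (i', j')"
    then have J: "i + 2 \<le> m" "i' + 2 \<le> m"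
      by auto
    have "replicate p a @ replicate n b \<in> ?G (i, j) \<longleftrightarrow>
        replicate p a @ replicate n b \<in> ?G (i', j')" for p
      using eq by simp
    then have "\<forall>p. i + p + 2 \<le> m \<longleftrightarrow> i' + p + 2 \<le> m"
      using assms by (simp add: counter_tests)
    moreover have "replicate q b \<in> ?G (i, j) \<longleftrightarrow> replicate q b \<in> ?G (i', j')" for q
      using eq by simp
    then have "\<forall>q. j + q + 2 \<le> n \<longleftrightarrow> j' + q + 2 \<le> n"
      using J assms by (simp add: counter_tests)
    ultimately show "(\<forall>p. i + p + 2 \<le> m \<longleftrightarrow> i' + p + 2 \<le> m) \<and>
        (\<forall>q. j + q + 2 \<le> n \<longleftrightarrow> j' + q + 2 \<le> n)" ..
  qed auto
  moreover have corner: "(m - 1, 0) \<in> ?I - ?J"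
    using m n by auto
  moreover have "?G (m - 1, 0) \<notin> ?G ` ?J"
    using saturated[OF corner] nonempty by force
  ultimately have "card (?G ` ?I) = card ?J + 1"
  proof (intro card_image_collapse)
    show "?G x = ?G (m - 1, 0)" if "x \<in> ?I - ?J" for x
      using saturated[OF that] saturated[OF corner] by (simp only:)
  qed auto
  then show ?thesis
    using kappa_two_counters[where f="(-)", OF quotient_lang_Diff] by (simp add: card_cartesian_product)
qed

context
  fixes c d :: 'a
  assumes c: "c \<in> \<Sigma>" "c \<in> C" "c \<notin> D" and d: "d \<in> \<Sigma>" "d \<in> D" "d \<notin> C"
begin

lemma reset_letters_distinct: "c \<noteq> a" "c \<noteq> b" "d \<noteq> a" "d \<noteq> b"
  using a b c d by auto

lemma reset_tests:
  "replicate p a @ [d] \<in> counter_res \<Sigma> b D n j"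
  "c # replicate q b \<in> counter_res \<Sigma> a C m i"
  using counter_res_reset[of "replicate p a" d "[]" \<Sigma> D b n j]
    counter_res_reset[of "[]" c "replicate q b" \<Sigma> C a m i] a b c d ab m n
  by (auto simp: replicate_in_lists)

(* With separate reset letters c for a and d for b, the words a^p d and c b^q test the two
   coordinates independently, so intersection keeps all m * n pairs apart. *)
lemma kappa_counters_Int_resetting:
  "kappa \<Sigma> (counter_lang \<Sigma> a C m \<inter> counter_lang \<Sigma> b D n) = m * n"
proof -
  let ?G = "\<lambda>(i, j). counter_res \<Sigma> a C m i \<inter> counter_res \<Sigma> b D n j"
  have "inj_on ?G ({..<m} \<times> {..<n})"
  proof (rule inj_on_pairs_by_thresholds)
    fix i j i' j' assume eq: "?G (i, j) = ?G (i', j')"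
    have "replicate p a @ [d] \<in> ?G (i, j) \<longleftrightarrow> replicate p a @ [d] \<in> ?G (i', j')" for p
      using eq by simp
    then have "\<forall>p. i + p + 2 \<le> m \<longleftrightarrow> i' + p + 2 \<le> m"
      using c d reset_letters_distinct by (simp add: reset_tests counter_tests)
    moreover have "c # replicate q b \<in> ?G (i, j) \<longleftrightarrow> c # replicate q b \<in> ?G (i', j')" for q
      using eq by simp
    then have "\<forall>q. j + q + 2 \<le> n \<longleftrightarrow> j' + q + 2 \<le> n"
      using c d reset_letters_distinct by (simp add: reset_tests counter_tests)
    ultimately show "(\<forall>p. i + p + 2 \<le> m \<longleftrightarrow> i' + p + 2 \<le> m) \<and>
        (\<forall>q. j + q + 2 \<le> n \<longleftrightarrow> j' + q + 2 \<le> n)" ..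
  qed simp
  then show ?thesis
    using kappa_two_counters[where f="(\<inter>)", OF quotient_lang_Int]
    by (simp add: card_image card_cartesian_product)
qed

(* Likewise for difference, using the tests a^p b^n and c b^q. *)
lemma kappa_counters_Diff_resetting:
  "kappa \<Sigma> (counter_lang \<Sigma> a C m - counter_lang \<Sigma> b D n) = m * n"
proof -
  let ?G = "\<lambda>(i, j). counter_res \<Sigma> a C m i - counter_res \<Sigma> b D n j"
  have "inj_on ?G ({..<m} \<times> {..<n})"
  proof (rule inj_on_pairs_by_thresholds)
    fix i j i' j' assume eq: "?G (i, j) = ?G (i', j')"
    have "replicate p a @ replicate n b \<in> ?G (i, j) \<longleftrightarrow>
        replicate p a @ replicate n b \<in> ?G (i', j')" for p
      using eq by simp
    then have "\<forall>p. i + p + 2 \<le> m \<longleftrightarrow> i' + p + 2 \<le> m"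
      by (simp add: counter_tests)
    moreover have "c # replicate q b \<in> ?G (i, j) \<longleftrightarrow> c # replicate q b \<in> ?G (i', j')" for q
      using eq by simp
    then have "\<forall>q. j + q + 2 \<le> n \<longleftrightarrow> j' + q + 2 \<le> n"
      using c d reset_letters_distinct by (simp add: reset_tests counter_tests)
    ultimately show "(\<forall>p. i + p + 2 \<le> m \<longleftrightarrow> i' + p + 2 \<le> m) \<and>
        (\<forall>q. j + q + 2 \<le> n \<longleftrightarrow> j' + q + 2 \<le> n)" ..
  qed simp
  then show ?thesis
    using kappa_two_counters[where f="(-)", OF quotient_lang_Diff]
    by (simp add: card_image card_cartesian_product)
qed

end

end

lemma kappa_counters_without_resets:
  assumes "a \<in> \<Sigma>" "b \<in> \<Sigma>" "a \<noteq> b" "2 \<le> m" "2 \<le> n"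
  shows "kappa \<Sigma> (counter_lang \<Sigma> a {} m \<inter> counter_lang \<Sigma> b {} n) = m * n - (m + n - 2)"
    and "kappa \<Sigma> (counter_lang \<Sigma> a {} m \<union> counter_lang \<Sigma> b {} n) = m * n"
    and "kappa \<Sigma> (symdiff (counter_lang \<Sigma> a {} m) (counter_lang \<Sigma> b {} n)) = m * n"
    and "kappa \<Sigma> (counter_lang \<Sigma> a {} m - counter_lang \<Sigma> b {} n) = m * n - (n - 1)"
  using kappa_counters_Int_collapsing[of a \<Sigma> "{}" "{}" b m n]
    kappa_counters_Un[of a \<Sigma> "{}" "{}" b m n] kappa_counters_symdiff[of a \<Sigma> "{}" "{}" b m n]
    kappa_counters_Diff_collapsing[of a \<Sigma> "{}" "{}" b m n] bound_identities[of m n] assms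
  by simp_all

lemma kappa_counters_with_resets:
  assumes "a \<in> \<Sigma>" "b \<in> \<Sigma>" "c \<in> \<Sigma>" "d \<in> \<Sigma>" "distinct [a, b, c, d]" "2 \<le> m" "2 \<le> n"
  shows "kappa \<Sigma> (counter_lang \<Sigma> a {c} m \<union> counter_lang \<Sigma> b {d} n) = m * n"
    and "kappa \<Sigma> (counter_lang \<Sigma> a {c} m \<inter> counter_lang \<Sigma> b {d} n) = m * n"
    and "kappa \<Sigma> (counter_lang \<Sigma> a {c} m - counter_lang \<Sigma> b {d} n) = m * n"
    and "kappa \<Sigma> (symdiff (counter_lang \<Sigma> a {c} m) (counter_lang \<Sigma> b {d} n)) = m * n"
  using kappa_counters_Un[of a \<Sigma> "{c}" "{d}" b m n]
    kappa_counters_Int_resetting[of a \<Sigma> "{c}" "{d}" b m n c d]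
    kappa_counters_Diff_resetting[of a \<Sigma> "{c}" "{d}" b m n c d]
    kappa_counters_symdiff[of a \<Sigma> "{c}" "{d}" b m n] assms
  by simp_all

lemma four_distinct_elements:
  assumes "4 \<le> card S"
  obtains a b c d where "a \<in> S" "b \<in> S" "c \<in> S" "d \<in> S" "distinct [a, b, c, d]"
  using assms by (auto simp: numeral_eq_Suc card_le_Suc_iff intro: that)

theorem theorem2:
  fixes \<Sigma> :: "'a set"
  assumes "finite \<Sigma>" and "\<Sigma> \<noteq> {}"
  shows
   "(\<forall>K L m n. regular \<Sigma> K \<and> regular \<Sigma> L \<and> kappa \<Sigma> K = m \<and> kappa \<Sigma> L = n \<and> 2 \<le> m \<and> 2 \<le> n \<and>
       ((prefix_closed K \<and> prefix_closed L) \<or> (factor_closed K \<and> factor_closed L) \<or>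
        (subword_closed K \<and> subword_closed L)) \<longrightarrow>
       kappa \<Sigma> (K \<inter> L) \<le> m * n - (m + n - 2) \<and>
       kappa \<Sigma> (K \<union> L) \<le> m * n \<and>
       kappa \<Sigma> (symdiff K L) \<le> m * n \<and>
       kappa \<Sigma> (K - L) \<le> m * n - (n - 1))
  \<and> (\<forall>K L m n. regular \<Sigma> K \<and> regular \<Sigma> L \<and> kappa \<Sigma> K = m \<and> kappa \<Sigma> L = n \<and> 2 \<le> m \<and> 2 \<le> n \<and>
       suffix_closed K \<and> suffix_closed L \<longrightarrow>
       kappa \<Sigma> (K \<union> L) \<le> m * n \<and>
       kappa \<Sigma> (K \<inter> L) \<le> m * n \<and>
       kappa \<Sigma> (K - L) \<le> m * n \<and>
       kappa \<Sigma> (symdiff K L) \<le> m * n)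
  \<and> (4 \<le> card \<Sigma> \<longrightarrow> (\<forall>m n. 2 \<le> m \<and> 2 \<le> n \<longrightarrow>
       (\<forall>P \<in> {prefix_closed, factor_closed, subword_closed}.
          (\<exists>K L. regular \<Sigma> K \<and> regular \<Sigma> L \<and> P K \<and> P L \<and> kappa \<Sigma> K = m \<and> kappa \<Sigma> L = n \<and>
                 kappa \<Sigma> (K \<inter> L) = m * n - (m + n - 2)) \<and>
          (\<exists>K L. regular \<Sigma> K \<and> regular \<Sigma> L \<and> P K \<and> P L \<and> kappa \<Sigma> K = m \<and> kappa \<Sigma> L = n \<and>
                 kappa \<Sigma> (K \<union> L) = m * n) \<and>
          (\<exists>K L. regular \<Sigma> K \<and> regular \<Sigma> L \<and> P K \<and> P L \<and> kappa \<Sigma> K = m \<and> kappa \<Sigma> L = n \<and>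
                 kappa \<Sigma> (symdiff K L) = m * n) \<and>
          (\<exists>K L. regular \<Sigma> K \<and> regular \<Sigma> L \<and> P K \<and> P L \<and> kappa \<Sigma> K = m \<and> kappa \<Sigma> L = n \<and>
                 kappa \<Sigma> (K - L) = m * n - (n - 1))) \<and>
       (\<forall>op \<in> {(\<union>), (\<inter>), (-), symdiff}.
          (\<exists>K L. regular \<Sigma> K \<and> regular \<Sigma> L \<and> suffix_closed K \<and> suffix_closed L \<and>
                 kappa \<Sigma> K = m \<and> kappa \<Sigma> L = n \<and> kappa \<Sigma> (op K L) = m * n))))"
proof (intro conjI allI impI)
  fix K L :: "'a list set" and m n :: nat
  assume H: "regular \<Sigma> K \<and> regular \<Sigma> L \<and> kappa \<Sigma> K = m \<and> kappa \<Sigma> L = n \<and> 2 \<le> m \<and> 2 \<le> n \<and>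
       ((prefix_closed K \<and> prefix_closed L) \<or> (factor_closed K \<and> factor_closed L) \<or>
        (subword_closed K \<and> subword_closed L))"
  then have "prefix_closed K" "prefix_closed L" "K \<subseteq> lists \<Sigma>" "L \<subseteq> lists \<Sigma>"
    using factor_closed_imp_prefix_closed subword_closed_imp_factor_closed
    by (auto simp: regular_def)
  with H show "kappa \<Sigma> (K \<inter> L) \<le> m * n - (m + n - 2)" "kappa \<Sigma> (K \<union> L) \<le> m * n"
    "kappa \<Sigma> (symdiff K L) \<le> m * n" "kappa \<Sigma> (K - L) \<le> m * n - (n - 1)"
    using upper_bounds_prefix_closed[of K L \<Sigma> m n] by auto
next
  fix K L :: "'a list set" and m n :: nat
  assume "regular \<Sigma> K \<and> regular \<Sigma> L \<and> kappa \<Sigma> K = m \<and> kappa \<Sigma> L = n \<and> 2 \<le> m \<and> 2 \<le> n \<and>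
       suffix_closed K \<and> suffix_closed L"
  then show "kappa \<Sigma> (K \<union> L) \<le> m * n" "kappa \<Sigma> (K \<inter> L) \<le> m * n"
    "kappa \<Sigma> (K - L) \<le> m * n" "kappa \<Sigma> (symdiff K L) \<le> m * n"
    using kappa_boolean_ops_le[of \<Sigma> K L] by auto
next
  assume "4 \<le> card \<Sigma>"
  then obtain a b c d where letters: "a \<in> \<Sigma>" "b \<in> \<Sigma>" "c \<in> \<Sigma>" "d \<in> \<Sigma>" "distinct [a, b, c, d]"
    by (rule four_distinct_elements)
  fix m n :: nat
  assume "2 \<le> m \<and> 2 \<le> n"
  then have m: "2 \<le> m" and n: "2 \<le> n" by auto
  let ?K = "counter_lang \<Sigma> a {} m" and ?L = "counter_lang \<Sigma> b {} n"
  have base: "regular \<Sigma> ?K \<and> regular \<Sigma> ?L \<and> kappa \<Sigma> ?K = m \<and> kappa \<Sigma> ?L = n"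
    using letters m n by (simp add: regular_counter_lang kappa_counter_lang)
  show "\<forall>P \<in> {prefix_closed, factor_closed, subword_closed}.
          (\<exists>K L. regular \<Sigma> K \<and> regular \<Sigma> L \<and> P K \<and> P L \<and> kappa \<Sigma> K = m \<and> kappa \<Sigma> L = n \<and>
                 kappa \<Sigma> (K \<inter> L) = m * n - (m + n - 2)) \<and>
          (\<exists>K L. regular \<Sigma> K \<and> regular \<Sigma> L \<and> P K \<and> P L \<and> kappa \<Sigma> K = m \<and> kappa \<Sigma> L = n \<and>
                 kappa \<Sigma> (K \<union> L) = m * n) \<and>
          (\<exists>K L. regular \<Sigma> K \<and> regular \<Sigma> L \<and> P K \<and> P L \<and> kappa \<Sigma> K = m \<and> kappa \<Sigma> L = n \<and>
                 kappa \<Sigma> (symdiff K L) = m * n) \<and>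
          (\<exists>K L. regular \<Sigma> K \<and> regular \<Sigma> L \<and> P K \<and> P L \<and> kappa \<Sigma> K = m \<and> kappa \<Sigma> L = n \<and>
                 kappa \<Sigma> (K - L) = m * n - (n - 1))" (is "\<forall>P \<in> _. ?tight P")
  proof
    fix P :: "'a list set \<Rightarrow> bool" assume "P \<in> {prefix_closed, factor_closed, subword_closed}"
    then have "P ?K" "P ?L"
      by (auto intro!: counter_lang_subword_closed subword_closed_imp_factor_closed
          factor_closed_imp_prefix_closed)
    with base show "?tight P"
      using kappa_counters_without_resets[of a \<Sigma> b m n] letters m n by auto
  qed
  let ?K' = "counter_lang \<Sigma> a {c} m" and ?L' = "counter_lang \<Sigma> b {d} n"
  have "regular \<Sigma> ?K' \<and> regular \<Sigma> ?L' \<and> kappa \<Sigma> ?K' = m \<and> kappa \<Sigma> ?L' = n"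
    using letters m n by (simp add: regular_counter_lang kappa_counter_lang)
  then have witness: "\<exists>K L. regular \<Sigma> K \<and> regular \<Sigma> L \<and> suffix_closed K \<and> suffix_closed L \<and>
      kappa \<Sigma> K = m \<and> kappa \<Sigma> L = n \<and> kappa \<Sigma> (op K L) = m * n"
    if "kappa \<Sigma> (op ?K' ?L') = m * n" for op
    using that counter_lang_suffix_closed[of \<Sigma> a "{c}" m]
      counter_lang_suffix_closed[of \<Sigma> b "{d}" n] by blast
  show "\<forall>op \<in> {(\<union>), (\<inter>), (-), symdiff}.
          (\<exists>K L. regular \<Sigma> K \<and> regular \<Sigma> L \<and> suffix_closed K \<and> suffix_closed L \<and>
                 kappa \<Sigma> K = m \<and> kappa \<Sigma> L = n \<and> kappa \<Sigma> (op K L) = m * n)"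
    using kappa_counters_with_resets[OF letters m n]
    by (simp only: ball_simps simp_thms) (intro conjI; rule witness, assumption)
qed

end
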